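(* Consider $\min_{x\in\mathbb{R}^p,z\in\mathbb{R}^N}F(x,z):=f(x,z)+g(x)+h(z)$, where: (i) $f$ is differentiable with $M$-Lipschitz joint gradient, i.e. $\|(\nabla_xf(x_1,z_1)-\nabla_xf(x_2,z_2),\nabla_zf(x_1,z_1)-\nabla_zf(x_2,z_2))\|\le M\|(x_1-x_2,z_1-z_2)\|$ for all arguments and some $M>0$, and $g:\mathbb{R}^p\to\mathbb{R}\cup\{\infty\}$, $h:\mathbb{R}^N\to\mathbb{R}\cup\{\infty\}$ are proper, lower semicontinuous and directionally differentiable; (ii) $F$ is bounded below; (iii) $g$ and $h$ are prox-bounded, i.e. $g+\frac\eta2\|\cdot\|^2$ and $h+\frac\eta2\|\cdot\|^2$ are bounded below for some $\eta>0$. Let $\{(x_t,z_t,\eta_t^x,\eta_t^z):t\ge0\}$ be generated by the following algorithm (GPALM), run indefinitely: fix an integer $r\ge1$, $\rho_1,\rho_2>1$, $\sigma_1,\sigma_2\in(0,1)$, $0<\underline\eta\le\overline\eta$, a starting point $(x_0,z_0)$, and $\hat\eta_0^x=\hat\eta_0^z=1$. At iteration $t$, for $l=0,1,2,\dots$ set $\eta_t^x=\rho_1^l\hat\eta_t^x$, $\eta_t^z=\rho_2^l\hat\eta_t^z$ and compute $$x_{t+1}\in\operatorname{Prox}_{g/\eta_t^x}\Big(x_t-\tfrac1{\eta_t^x}\nabla_xf(x_t,z_t)\Big),\quad z_{t+1}\in\operatorname{Prox}_{h/\eta_t^z}\Big(z_t-\tfrac1{\eta_t^z}\nabla_zf(x_{t+1},z_t)\Big),$$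 stopping at the first $l$ for which $$F(x_{t+1},z_{t+1})\le\max\{F(x_{t-r+1},z_{t-r+1}),\dots,F(x_t,z_t)\}-\tfrac{\sigma_1}2\eta_t^x\|x_{t+1}-x_t\|^2-\tfrac{\sigma_2}2\eta_t^z\|z_{t+1}-z_t\|^2$$ (only indices $\ge0$ in the maximum). Then set $$\hat\eta_{t+1}^x=\min\Big\{\overline\eta,\max\Big\{\underline\eta,\tfrac{\langle x_{t+1}-x_t,\nabla_xf(x_{t+1},z_{t+1})-\nabla_xf(x_t,z_t)\rangle}{\|x_{t+1}-x_t\|^2}\Big\}\Big\},$$ $$\hat\eta_{t+1}^z=\min\Big\{\overline\eta,\max\Big\{\underline\eta,\tfrac{\langle z_{t+1}-z_t,\nabla_zf(x_{t+1},z_{t+1})-\nabla_zf(x_{t+1},z_t)\rangle}{\|z_{t+1}-z_t\|^2}\Big\}\Big\}.$$ If the generated sequence $\{(x_t,z_t)\}$ is bounded and $F$ is continuous on a compact set containing the sequence, then any accumulation point of $\{(x_t,z_t)\}$ is a d-stationary point of $F$.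
   Context: $\|\cdot\|$ is the Euclidean norm. $\operatorname{Prox}_{\phi/\eta}(y):=\operatorname{argmin}_u\{\tfrac1\eta\phi(u)+\tfrac12\|u-y\|^2\}$. The directional derivative of $F$ at $(x,z)$ in direction $(d_x,d_z)$ is $F'(x,z;d_x,d_z):=\lim_{\tau\to+0}\frac{F(x+\tau d_x,z+\tau d_z)-F(x,z)}{\tau}$ (possibly $+\infty$). A point $(x^*,z^* )$ is d-stationary for $F$ if $F$ is directionally differentiable there and $F'(x^*,z^*;d_x,d_z)\ge0$ for all $(d_x,d_z)\in\mathbb{R}^p\times\mathbb{R}^N$. *)

theory Defs
  imports "HOL-Analysis.Analysis" "HOL-Library.Extended_Real"
begin

text \<open>Extended-real valued functions phi : V -> R \<union> {+inf} are modelled as V \<Rightarrow> ereal.\<close>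

definition proper_fun :: "('v \<Rightarrow> ereal) \<Rightarrow> bool" where
  "proper_fun \<phi> \<longleftrightarrow> (\<forall>x. \<phi> x \<noteq> -\<infinity>) \<and> (\<exists>x. \<phi> x \<noteq> \<infinity>)"

definition lsc_fun :: "('v::topological_space \<Rightarrow> ereal) \<Rightarrow> bool" where
  "lsc_fun \<phi> \<longleftrightarrow> (\<forall>c. closed {x. \<phi> x \<le> c})"

definition has_dir_deriv :: "('v::real_normed_vector \<Rightarrow> ereal) \<Rightarrow> 'v \<Rightarrow> 'v \<Rightarrow> ereal \<Rightarrow> bool" where
  "has_dir_deriv \<phi> x d L \<longleftrightarrow>
     ((\<lambda>\<tau>::real. (\<phi> (x + \<tau> *\<^sub>R d) - \<phi> x) / ereal \<tau>) \<longlongrightarrow> L) (at_right 0)"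

definition dir_differentiable :: "('v::real_normed_vector \<Rightarrow> ereal) \<Rightarrow> 'v \<Rightarrow> bool" where
  "dir_differentiable \<phi> x \<longleftrightarrow> \<bar>\<phi> x\<bar> \<noteq> \<infinity> \<and> (\<forall>d. \<exists>L. L \<noteq> -\<infinity> \<and> has_dir_deriv \<phi> x d L)"

definition d_stationary :: "('v::real_normed_vector \<Rightarrow> ereal) \<Rightarrow> 'v \<Rightarrow> bool" where
  "d_stationary \<phi> x \<longleftrightarrow> dir_differentiable \<phi> x \<and> (\<forall>d L. has_dir_deriv \<phi> x d L \<longrightarrow> L \<ge> 0)"

definition prox :: "('v::real_normed_vector \<Rightarrow> ereal) \<Rightarrow> real \<Rightarrow> 'v \<Rightarrow> 'v set" where
  "prox \<phi> \<eta> y = {u. \<forall>v. ereal (1/\<eta>) * \<phi> u + ereal ((norm (u - y))\<^sup>2 / 2)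
                          \<le> ereal (1/\<eta>) * \<phi> v + ereal ((norm (v - y))\<^sup>2 / 2)}"

definition Fobj :: "('a \<Rightarrow> 'b \<Rightarrow> real) \<Rightarrow> ('a \<Rightarrow> ereal) \<Rightarrow> ('b \<Rightarrow> ereal) \<Rightarrow> 'a \<times> 'b \<Rightarrow> ereal" where
  "Fobj f g h = (\<lambda>(x, z). ereal (f x z) + g x + h z)"

definition clip :: "real \<Rightarrow> real \<Rightarrow> real \<Rightarrow> real" where
  "clip lo hi q = min hi (max lo q)"

end

theory Submission
  imports Defs
begin

(*
  By the descent lemma for the M-Lipschitz gradient and the optimality of the proximal
  steps, a block step with step size eta >= M / (1 - sigma) already passes the
  acceptance test; so backtracking stops after a bounded number of trials and all step sizes
  stay in a fixed interval [eta_min, E].  The acceptance test makes the maxima W_t of F over the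
  windows {t-r+1..t} nonincreasing, hence convergent, and the argument of Grippo, Lampariello
  and Lucidi -- walking back through the r indices of a window, using the uniform continuity of
  F on a compact sublevel set -- shows that the steps (x_{t+1}, z_{t+1}) - (x_t, z_t) tend to 0.
  Along a subsequence converging to (xs, zs), lower semicontinuity turns the proximal
  inequalities of the steps into
      g xs <= g v + <grad_x f(xs, zs), v - xs> + E/2 |v - xs|^2    (and likewise for h),
  i.e. (xs, zs) is a fixed point of the proximal gradient map.  Such a point is d-stationary:
  these inequalities bound the directional derivatives of g and h from below by minus those
  of f.
*)

section \<open>Smooth functions with Lipschitz gradient\<close>

lemma has_real_derivative_along_line:
  fixes F :: "'v::real_inner \<Rightarrow> real"
  assumes "(F has_derivative (\<lambda>v. G \<bullet> v)) (at (p + s *\<^sub>R d))"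
  shows "((\<lambda>s. F (p + s *\<^sub>R d)) has_real_derivative G \<bullet> d) (at s)"
proof -
  have "((\<lambda>s. p + s *\<^sub>R d) has_derivative (\<lambda>s. s *\<^sub>R d)) (at s)"
    by (auto intro!: derivative_eq_intros)
  from diff_chain_at[OF this assms] show ?thesis
    by (simp add: has_field_derivative_def o_def mult_commute_abs)
qed

lemma lipschitz_gradient_descent:
  fixes F :: "'v::real_inner \<Rightarrow> real"
  assumes deriv: "\<And>q. (F has_derivative (\<lambda>v. G q \<bullet> v)) (at q)"
    and lip: "\<And>q q'. norm (G q - G q') \<le> M * norm (q - q')"
  shows "F (p + d) \<le> F p + G p \<bullet> d + M / 2 * (norm d)\<^sup>2"
proof -
  define \<theta> where "\<theta> s = F (p + s *\<^sub>R d) - s * (G p \<bullet> d) - M / 2 * s\<^sup>2 * (norm d)\<^sup>2" for s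
  have \<theta>_deriv: "(\<theta> has_real_derivative G (p + s *\<^sub>R d) \<bullet> d - G p \<bullet> d - M * s * (norm d)\<^sup>2) (at s)"
    for s
    unfolding \<theta>_def
    by (rule derivative_eq_intros has_real_derivative_along_line deriv refl)+ simp
  have "G (p + s *\<^sub>R d) \<bullet> d - G p \<bullet> d \<le> M * s * (norm d)\<^sup>2" if "0 \<le> s" for s
  proof -
    have "G (p + s *\<^sub>R d) \<bullet> d - G p \<bullet> d = (G (p + s *\<^sub>R d) - G p) \<bullet> d"
      by (simp add: inner_diff_left)
    also have "\<dots> \<le> norm (G (p + s *\<^sub>R d) - G p) * norm d"
      by (rule norm_cauchy_schwarz)
    also have "\<dots> \<le> M * norm (s *\<^sub>R d) * norm d"
      using lip[of "p + s *\<^sub>R d" p] by (simp add: mult_right_mono)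
    also have "\<dots> = M * s * (norm d)\<^sup>2"
      using that by (simp add: power2_eq_square)
    finally show ?thesis .
  qed
  then have "\<theta> 1 \<le> \<theta> 0"
    using \<theta>_deriv by (intro DERIV_nonpos_imp_nonincreasing[of 0 1]) force+
  then show ?thesis
    by (simp add: \<theta>_def)
qed

lemma has_derivative_dir_quotient_tendsto:
  fixes F :: "'v::real_inner \<Rightarrow> real"
  assumes "(F has_derivative (\<lambda>v. G \<bullet> v)) (at p)"
  shows "((\<lambda>\<tau>. (F (p + \<tau> *\<^sub>R d) - F p) / \<tau>) \<longlongrightarrow> G \<bullet> d) (at_right 0)"
proof -
  have "((\<lambda>s. F (p + s *\<^sub>R d)) has_real_derivative G \<bullet> d) (at 0)"
    using assms by (intro has_real_derivative_along_line) simp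
  then have "((\<lambda>s. F (p + s *\<^sub>R d)) has_real_derivative G \<bullet> d) (at 0 within {0<..})"
    by (rule has_field_derivative_at_within)
  then show ?thesis
    by (simp add: has_field_derivative_iff)
qed

section \<open>Proximal points and directional derivatives\<close>

lemma prox_inequality:
  fixes \<phi> :: "'v::real_inner \<Rightarrow> ereal"
  assumes u: "u \<in> prox \<phi> \<eta> (y - (1 / \<eta>) *\<^sub>R G)" and \<eta>: "0 < \<eta>"
    and proper: "\<And>v. \<phi> v \<noteq> -\<infinity>"
  shows "\<phi> u \<le> \<phi> v + ereal (G \<bullet> (v - u) + \<eta> / 2 * (norm (v - y))\<^sup>2 - \<eta> / 2 * (norm (u - y))\<^sup>2)"
proof -
  define q where "q w = (norm (w - (y - (1 / \<eta>) *\<^sub>R G)))\<^sup>2 / 2" for w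
  have q: "\<eta> * q w = \<eta> / 2 * (norm (w - y))\<^sup>2 + G \<bullet> (w - y) + (norm G)\<^sup>2 / (2 * \<eta>)" for w
  proof -
    have "(norm ((w - y) + (1 / \<eta>) *\<^sub>R G))\<^sup>2
        = (norm (w - y))\<^sup>2 + 2 / \<eta> * (G \<bullet> (w - y)) + (norm G)\<^sup>2 / \<eta>\<^sup>2"
      by (simp only: power2_norm_eq_inner)
        (simp add: inner_add_left inner_add_right inner_commute power2_eq_square)
    moreover have "w - (y - (1 / \<eta>) *\<^sub>R G) = (w - y) + (1 / \<eta>) *\<^sub>R G"
      by simp
    ultimately show ?thesis
      using \<eta> unfolding q_def by (simp add: field_simps power2_eq_square)
  qed
  have min: "ereal (1 / \<eta>) * \<phi> u + ereal (q u) \<le> ereal (1 / \<eta>) * \<phi> v + ereal (q v)"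
    using u unfolding prox_def q_def by blast
  show ?thesis
  proof (cases "\<phi> v")
    case (real b)
    with min \<eta> proper[of u] obtain a where a: "\<phi> u = ereal a"
      by (cases "\<phi> u") auto
    with min real have "a / \<eta> + q u \<le> b / \<eta> + q v"
      by simp
    then have "\<eta> * (a / \<eta> + q u) \<le> \<eta> * (b / \<eta> + q v)"
      using \<eta> by (simp add: mult_left_mono)
    then have "a + \<eta> * q u \<le> b + \<eta> * q v"
      using \<eta> by (simp add: distrib_left)
    then have "a \<le> b + (G \<bullet> (v - u) + \<eta> / 2 * (norm (v - y))\<^sup>2 - \<eta> / 2 * (norm (u - y))\<^sup>2)"
      unfolding q by (simp add: inner_diff_right)
    then show ?thesis
      using a real by simp
  qed (use proper in auto)
qed

lemma prox_inequality_relaxed: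
  fixes \<phi> :: "'v::real_inner \<Rightarrow> ereal"
  assumes u: "u \<in> prox \<phi> \<eta> (y - (1 / \<eta>) *\<^sub>R G)" and \<eta>: "0 < \<eta>" "\<eta> \<le> E"
    and proper: "\<And>v. \<phi> v \<noteq> -\<infinity>"
  shows "\<phi> u \<le> \<phi> v + ereal (G \<bullet> (v - u) + E / 2 * (norm (v - y))\<^sup>2)"
proof -
  have "\<eta> / 2 * (norm (v - y))\<^sup>2 \<le> E / 2 * (norm (v - y))\<^sup>2"
    using \<eta> by (intro mult_right_mono) auto
  moreover have "0 \<le> \<eta> / 2 * (norm (u - y))\<^sup>2"
    using \<eta> by simp
  ultimately have "G \<bullet> (v - u) + \<eta> / 2 * (norm (v - y))\<^sup>2 - \<eta> / 2 * (norm (u - y))\<^sup>2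
      \<le> G \<bullet> (v - u) + E / 2 * (norm (v - y))\<^sup>2"
    by linarith
  then show ?thesis
    using prox_inequality[OF u \<eta>(1) proper, of v] by (meson add_left_mono ereal_less_eq(3) order_trans)
qed

lemma prox_point_finite:
  fixes \<phi> :: "'v::real_normed_vector \<Rightarrow> ereal"
  assumes u: "u \<in> prox \<phi> \<eta> y" and \<eta>: "0 < \<eta>" and v: "\<phi> v \<noteq> \<infinity>"
  shows "\<phi> u \<noteq> \<infinity>"
proof
  assume "\<phi> u = \<infinity>"
  moreover have "ereal (1 / \<eta>) * \<phi> u + ereal ((norm (u - y))\<^sup>2 / 2)
      \<le> ereal (1 / \<eta>) * \<phi> v + ereal ((norm (v - y))\<^sup>2 / 2)"
    using u unfolding prox_def by blast
  ultimately show False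
    using \<eta> v by (cases "\<phi> v") auto
qed

lemma lsc_fun_le_limit:
  fixes \<phi> :: "'v::topological_space \<Rightarrow> ereal"
  assumes lsc: "lsc_fun \<phi>" and X: "X \<longlonglongrightarrow> a" and le: "\<And>n. \<phi> (X n) \<le> Y n" and Y: "Y \<longlonglongrightarrow> y"
  shows "\<phi> a \<le> y"
proof (rule dense_ge)
  fix c assume "y < c"
  show "\<phi> a \<le> c"
  proof (cases c)
    case (real c')
    have "\<forall>\<^sub>F n in sequentially. Y n < c"
      using Y \<open>y < c\<close> by (rule order_tendstoD)
    then have "\<forall>\<^sub>F n in sequentially. X n \<in> {v. \<phi> v \<le> ereal c'}"
      by eventually_elim (use le real in \<open>auto intro: order_trans less_imp_le\<close>)
    with lsc X have "a \<in> {v. \<phi> v \<le> ereal c'}"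
      unfolding lsc_fun_def by (intro Lim_in_closed_set) auto
    then show ?thesis
      using real by simp
  qed (use \<open>y < c\<close> in auto)
qed

lemma lsc_prox_inequality_limit:
  fixes \<phi> :: "'v::real_inner \<Rightarrow> ereal"
  assumes lsc: "lsc_fun \<phi>"
    and ineq: "\<And>n. \<phi> (u n) \<le> \<phi> v + ereal (G n \<bullet> (v - u n) + E / 2 * (norm (v - y n))\<^sup>2)"
    and u: "u \<longlonglongrightarrow> a" and y: "y \<longlonglongrightarrow> a" and G: "G \<longlonglongrightarrow> G0"
  shows "\<phi> a \<le> \<phi> v + ereal (G0 \<bullet> (v - a) + E / 2 * (norm (v - a))\<^sup>2)"
  by (rule lsc_fun_le_limit[OF lsc u ineq])
    (intro tendsto_add_ereal_general tendsto_const tendsto_ereal tendsto_intros u y G; simp)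

lemma has_dir_deriv_unique:
  "has_dir_deriv \<phi> x d L \<Longrightarrow> has_dir_deriv \<phi> x d L' \<Longrightarrow> L = L'"
  unfolding has_dir_deriv_def using tendsto_unique[OF trivial_limit_at_right_real] by blast

lemma proximal_subgradient_le_dir_deriv:
  fixes \<phi> :: "'v::real_inner \<Rightarrow> ereal"
  assumes fin: "\<bar>\<phi> x\<bar> \<noteq> \<infinity>"
    and ineq: "\<And>v. \<phi> x \<le> \<phi> v + ereal (G \<bullet> (v - x) + E / 2 * (norm (v - x))\<^sup>2)"
    and L: "has_dir_deriv \<phi> x d L"
  shows "ereal (- (G \<bullet> d)) \<le> L"
proof (rule tendsto_le[OF trivial_limit_at_right_real])
  show "((\<lambda>\<tau>. (\<phi> (x + \<tau> *\<^sub>R d) - \<phi> x) / ereal \<tau>) \<longlongrightarrow> L) (at_right 0)"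
    using L unfolding has_dir_deriv_def .
  show "((\<lambda>\<tau>. ereal (- (G \<bullet> d) - E / 2 * \<tau> * (norm d)\<^sup>2)) \<longlongrightarrow> ereal (- (G \<bullet> d))) (at_right 0)"
    by (intro tendsto_ereal tendsto_eq_intros) auto
  obtain a where a: "\<phi> x = ereal a"
    using fin by (cases "\<phi> x") auto
  show "\<forall>\<^sub>F \<tau> in at_right 0. ereal (- (G \<bullet> d) - E / 2 * \<tau> * (norm d)\<^sup>2) \<le> (\<phi> (x + \<tau> *\<^sub>R d) - \<phi> x) / ereal \<tau>"
    using eventually_at_right_less
  proof eventually_elim
    case (elim \<tau>)
    have "ereal a \<le> \<phi> (x + \<tau> *\<^sub>R d) + ereal (\<tau> * (G \<bullet> d) + E / 2 * \<tau>\<^sup>2 * (norm d)\<^sup>2)"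
      using ineq[of "x + \<tau> *\<^sub>R d"] elim a by (simp add: power_mult_distrib mult.assoc)
    then show ?case
    proof (cases "\<phi> (x + \<tau> *\<^sub>R d)")
      case (real b)
      with \<open>ereal a \<le> _\<close> have "\<tau> * (- (G \<bullet> d) - E / 2 * \<tau> * (norm d)\<^sup>2) \<le> b - a"
        by (simp add: algebra_simps power2_eq_square)
      then show ?thesis
        using real a elim by (simp add: pos_le_divide_eq mult.commute)
    qed (use a elim in auto)
  qed
qed

lemma has_dir_deriv_Fobj:
  fixes f :: "'a::real_normed_vector \<Rightarrow> 'b::real_normed_vector \<Rightarrow> real"
  assumes f: "((\<lambda>\<tau>. (f (x + \<tau> *\<^sub>R dx) (z + \<tau> *\<^sub>R dz) - f x z) / \<tau>) \<longlongrightarrow> Lf) (at_right 0)"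
    and g: "has_dir_deriv g x dx Lg" "Lg \<noteq> -\<infinity>"
    and h: "has_dir_deriv h z dz Lh" "Lh \<noteq> -\<infinity>"
    and fin: "\<bar>g x\<bar> \<noteq> \<infinity>" "\<bar>h z\<bar> \<noteq> \<infinity>"
    and proper: "\<And>u. g u \<noteq> -\<infinity>" "\<And>v. h v \<noteq> -\<infinity>"
  shows "has_dir_deriv (Fobj f g h) (x, z) (dx, dz) (ereal Lf + Lg + Lh)"
proof -
  have "((\<lambda>\<tau>. ereal ((f (x + \<tau> *\<^sub>R dx) (z + \<tau> *\<^sub>R dz) - f x z) / \<tau>)
      + (g (x + \<tau> *\<^sub>R dx) - g x) / ereal \<tau> + (h (z + \<tau> *\<^sub>R dz) - h z) / ereal \<tau>)
      \<longlongrightarrow> ereal Lf + Lg + Lh) (at_right 0)"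
    using g h unfolding has_dir_deriv_def
    by (intro tendsto_add_ereal_general tendsto_ereal f) auto
  moreover have "\<forall>\<^sub>F \<tau> in at_right 0. ereal ((f (x + \<tau> *\<^sub>R dx) (z + \<tau> *\<^sub>R dz) - f x z) / \<tau>)
      + (g (x + \<tau> *\<^sub>R dx) - g x) / ereal \<tau> + (h (z + \<tau> *\<^sub>R dz) - h z) / ereal \<tau>
      = (Fobj f g h ((x, z) + \<tau> *\<^sub>R (dx, dz)) - Fobj f g h (x, z)) / ereal \<tau>"
    using eventually_at_right_less
  proof eventually_elim
    case (elim \<tau>)
    then show ?case
      using fin proper(1)[of "x + \<tau> *\<^sub>R dx"] proper(2)[of "z + \<tau> *\<^sub>R dz"]
      by (cases "g x"; cases "h z"; cases "g (x + \<tau> *\<^sub>R dx)"; cases "h (z + \<tau> *\<^sub>R dz)")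
        (auto simp: Fobj_def diff_divide_distrib add_divide_distrib)
  qed
  ultimately show ?thesis
    unfolding has_dir_deriv_def by (rule Lim_transform_eventually)
qed

section \<open>Nonmonotone descent\<close>

lemma Max_window_Suc_le:
  fixes a :: "nat \<Rightarrow> 'o::linorder"
  assumes "1 \<le> r" and "a (Suc t) \<le> Max (a ` {Suc t - r..t})"
  shows "Max (a ` {Suc (Suc t) - r..Suc t}) \<le> Max (a ` {Suc t - r..t})"
proof (rule Max.boundedI)
  fix b assume "b \<in> a ` {Suc (Suc t) - r..Suc t}"
  then obtain j where j: "j \<in> {Suc (Suc t) - r..Suc t}" "b = a j"
    by blast
  show "b \<le> Max (a ` {Suc t - r..t})"
  proof (cases "j = Suc t")
    case False
    then have "j \<in> {Suc t - r..t}"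
      using j by auto
    then show ?thesis
      using j by (intro Max_ge) auto
  qed (use assms j in simp)
qed (use assms(1) in auto)

lemma Max_window_convergent:
  fixes a :: "nat \<Rightarrow> real"
  assumes r: "1 \<le> r" and le: "\<And>t. T \<le> t \<Longrightarrow> a (Suc t) \<le> Max (a ` {Suc t - r..t})"
    and lo: "\<And>t. lo \<le> a t"
  shows "convergent (\<lambda>t. Max (a ` {Suc t - r..t}))"
proof -
  define W where "W t = Max (a ` {Suc t - r..t})" for t
  have "decseq (\<lambda>n. W (n + T))"
    unfolding decseq_Suc_iff W_def using Max_window_Suc_le[OF r le] by simp
  moreover have "lo \<le> W (n + T)" for n
    using lo[of "n + T"] r unfolding W_def by (intro order_trans[OF _ Max_ge]) auto
  ultimately obtain L where "(\<lambda>n. W (n + T)) \<longlonglongrightarrow> L"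
    using decseq_convergent by blast
  then show ?thesis
    unfolding W_def convergent_def by (blast intro: LIMSEQ_offset)
qed

lemma tendsto_zero_from_window_offsets:
  fixes d :: "nat \<Rightarrow> real"
  assumes nonneg: "\<And>t. 0 \<le> d t" and m: "\<And>t. Suc t - r \<le> m t" "\<And>t. m t \<le> t"
    and behind: "\<And>j. j < r \<Longrightarrow> (\<lambda>t. d (m t - Suc j)) \<longlonglongrightarrow> 0"
  shows "d \<longlonglongrightarrow> 0"
proof (rule tendsto_sandwich[OF _ _ tendsto_const])
  show "(\<lambda>t. \<Sum>j<r. d (m (t + r) - Suc j)) \<longlonglongrightarrow> 0"
    using behind by (intro tendsto_null_sum LIMSEQ_ignore_initial_segment) auto
  show "\<forall>\<^sub>F t in sequentially. d t \<le> (\<Sum>j<r. d (m (t + r) - Suc j))"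
  proof (intro always_eventually allI)
    fix t
    have "Suc t \<le> m (t + r)" "m (t + r) \<le> t + r"
      using m[of "t + r"] by auto
    then have "m (t + r) - Suc t \<in> {..<r}" "m (t + r) - Suc (m (t + r) - Suc t) = t"
      by auto
    then show "d t \<le> (\<Sum>j<r. d (m (t + r) - Suc j))"
      using member_le_sum[of _ "{..<r}" "\<lambda>j. d (m (t + r) - Suc j)"] nonneg by fastforce
  qed
qed (use nonneg in auto)

lemma sufficient_decrease_limit:
  fixes \<phi> :: "'c::metric_space \<Rightarrow> real"
  assumes c: "0 < c" and unif: "uniformly_continuous_on S \<phi>" and PQ: "\<And>t. P t \<in> S" "\<And>t. Q t \<in> S"
    and Q_lim: "(\<lambda>t. \<phi> (Q t)) \<longlonglongrightarrow> L" and B_lim: "B \<longlonglongrightarrow> L"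
    and decrease: "\<forall>\<^sub>F t in sequentially. \<phi> (Q t) \<le> B t - c * (dist (P t) (Q t))\<^sup>2"
  shows "(\<lambda>t. dist (P t) (Q t)) \<longlonglongrightarrow> 0" "(\<lambda>t. \<phi> (P t)) \<longlonglongrightarrow> L"
proof -
  have "(\<lambda>t. (B t - \<phi> (Q t)) / c) \<longlonglongrightarrow> (L - L) / c"
    using c by (intro tendsto_intros B_lim Q_lim) auto
  then have gap_lim: "(\<lambda>t. (B t - \<phi> (Q t)) / c) \<longlonglongrightarrow> 0"
    by simp
  have gap_bound: "\<forall>\<^sub>F t in sequentially. (dist (P t) (Q t))\<^sup>2 \<le> (B t - \<phi> (Q t)) / c"
    using decrease by eventually_elim (use c in \<open>simp add: pos_le_divide_eq mult.commute\<close>)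
  have "(\<lambda>t. (dist (P t) (Q t))\<^sup>2) \<longlonglongrightarrow> 0"
    by (rule tendsto_sandwich[OF _ gap_bound tendsto_const gap_lim]) simp
  then have "(\<lambda>t. sqrt ((dist (P t) (Q t))\<^sup>2)) \<longlonglongrightarrow> sqrt 0"
    by (rule tendsto_real_sqrt)
  then show dist_lim: "(\<lambda>t. dist (P t) (Q t)) \<longlonglongrightarrow> 0"
    by simp
  then have "(\<lambda>t. dist (\<phi> (P t)) (\<phi> (Q t))) \<longlonglongrightarrow> 0"
    using unif PQ unfolding uniformly_continuous_on_sequentially by blast
  then have "(\<lambda>t. \<phi> (P t) - \<phi> (Q t)) \<longlonglongrightarrow> 0"
    by (simp add: dist_real_def tendsto_rabs_zero_iff)
  with Q_lim show "(\<lambda>t. \<phi> (P t)) \<longlonglongrightarrow> L"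
    by (rule Lim_transform)
qed

lemma nonmonotone_descent_steps_tendsto_zero:
  fixes \<phi> :: "'c::metric_space \<Rightarrow> real" and p :: "nat \<Rightarrow> 'c"
  assumes r: "1 \<le> r" and c: "0 < c"
    and S: "compact S" "continuous_on S \<phi>" "range p \<subseteq> S"
    and decrease: "\<And>t. T \<le> t \<Longrightarrow>
      \<phi> (p (Suc t)) \<le> Max ((\<lambda>j. \<phi> (p j)) ` {Suc t - r..t}) - c * (dist (p t) (p (Suc t)))\<^sup>2"
  shows "(\<lambda>t. dist (p t) (p (Suc t))) \<longlonglongrightarrow> 0"
proof -
  define W where "W t = Max ((\<lambda>j. \<phi> (p j)) ` {Suc t - r..t})" for t
  obtain lo where "\<And>t. lo \<le> \<phi> (p t)"
    using continuous_attains_inf[OF S(1) _ S(2)] S(3) by blast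
  moreover have "\<phi> (p (Suc t)) \<le> W t" if "T \<le> t" for t
    using decrease[OF that] c unfolding W_def by (smt (verit) zero_le_power2 mult_nonneg_nonneg)
  ultimately obtain L where W_lim: "W \<longlonglongrightarrow> L"
    using Max_window_convergent[OF r, of T "\<lambda>t. \<phi> (p t)"] unfolding W_def convergent_def by blast
  have "W t \<in> (\<lambda>j. \<phi> (p j)) ` {Suc t - r..t}" for t
    unfolding W_def using r by (intro Max_in) auto
  then have "\<forall>t. \<exists>j. j \<in> {Suc t - r..t} \<and> \<phi> (p j) = W t"
    by (metis imageE)
  then obtain m where m: "\<And>t. m t \<in> {Suc t - r..t}" "\<And>t. \<phi> (p (m t)) = W t"
    by metis
  have m_lim: "filterlim (\<lambda>t. m t - k) sequentially sequentially" for k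
  proof (rule filterlim_at_top_mono[OF filterlim_minus_const_nat_at_top[of "r + k"]])
    show "\<forall>\<^sub>F t in sequentially. t - (r + k) \<le> m t - k"
    proof (intro always_eventually allI)
      fix t
      have "Suc t - r \<le> m t"
        using m(1) by auto
      then show "t - (r + k) \<le> m t - k"
        by linarith
    qed
  qed
  have unif: "uniformly_continuous_on S \<phi>"
    using S by (intro compact_uniformly_continuous)
  \<comment> \<open>\<open>m t\<close> attains the window maximum; going back from it, each sufficient decrease
    forces the step before to vanish and, by uniform continuity, \<open>\<phi> \<circ> p\<close> to keep the limit.\<close>
  have recede: "(\<lambda>t. dist (p (m t - Suc j)) (p (Suc (m t - Suc j)))) \<longlonglongrightarrow> 0
      \<and> (\<lambda>t. \<phi> (p (m t - Suc j))) \<longlonglongrightarrow> L"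
    if ahead: "(\<lambda>t. \<phi> (p (m t - j))) \<longlonglongrightarrow> L" for j
  proof -
    have "\<forall>\<^sub>F t in sequentially. Suc T \<le> m t - Suc j"
      using m_lim[of "Suc j"] unfolding filterlim_at_top by blast
    then have ev: "\<forall>\<^sub>F t in sequentially. T \<le> m t - Suc j \<and> Suc (m t - Suc j) = m t - j"
      by eventually_elim auto
    have Q_lim: "(\<lambda>t. \<phi> (p (Suc (m t - Suc j)))) \<longlonglongrightarrow> L"
      using ahead ev by (rule Lim_transform_eventually[OF _ eventually_mono]) simp
    have dec: "\<forall>\<^sub>F t in sequentially. \<phi> (p (Suc (m t - Suc j)))
        \<le> W (m t - Suc j) - c * (dist (p (m t - Suc j)) (p (Suc (m t - Suc j))))\<^sup>2"
    proof (rule eventually_mono[OF ev])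
      fix t assume "T \<le> m t - Suc j \<and> Suc (m t - Suc j) = m t - j"
      then show "\<phi> (p (Suc (m t - Suc j)))
          \<le> W (m t - Suc j) - c * (dist (p (m t - Suc j)) (p (Suc (m t - Suc j))))\<^sup>2"
        unfolding W_def by (rule decrease[OF conjunct1])
    qed
    show ?thesis
      using sufficient_decrease_limit[where P = "\<lambda>t. p (m t - Suc j)" and Q = "\<lambda>t. p (Suc (m t - Suc j))",
          OF c unif _ _ Q_lim filterlim_compose[OF W_lim m_lim] dec] S(3) by auto
  qed
  have ahead: "(\<lambda>t. \<phi> (p (m t - j))) \<longlonglongrightarrow> L" for j
  proof (induction j)
    case 0
    then show ?case
      using W_lim m(2) by simp
  qed (use recede in blast)
  show ?thesis
  proof (rule tendsto_zero_from_window_offsets[where m = m])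
    show "Suc t - r \<le> m t" "m t \<le> t" for t
      using m(1)[of t] by auto
  qed (use recede[OF ahead] in auto)
qed

lemma compact_Int_vimage_atMost:
  fixes F :: "'c::metric_space \<Rightarrow> ereal"
  assumes "compact K" "continuous_on K F"
  shows "compact (K \<inter> F -` {..C})"
proof -
  have "closed (F -` {..C} \<inter> K)"
    using continuous_on_closed_vimage[OF compact_imp_closed[OF assms(1)], THEN iffD1, OF assms(2),
        rule_format, OF closed_atMost] .
  then have "compact (K \<inter> (F -` {..C} \<inter> K))"
    by (rule compact_Int_closed[OF assms(1)])
  then show ?thesis
    by (metis Int_commute Int_left_absorb)
qed

lemma continuous_on_real_of_ereal_vimage_atMost:
  fixes F :: "'c::topological_space \<Rightarrow> ereal"
  assumes "continuous_on K F" "\<And>q. F q \<noteq> -\<infinity>"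
  shows "continuous_on (K \<inter> F -` {..ereal C}) (\<lambda>q. real_of_ereal (F q))"
proof (rule continuous_on_compose2[OF continuous_on_real continuous_on_subset[OF assms(1)]])
  show "F ` (K \<inter> F -` {..ereal C}) \<subseteq> UNIV - {\<infinity>, - \<infinity>}"
    using assms(2) by auto
qed auto

lemma power_mult_eventually_ge:
  fixes \<rho> :: real
  assumes \<rho>: "1 < \<rho>" and e: "0 < e"
  obtains N where "\<And>n \<eta>. N \<le> n \<Longrightarrow> e \<le> \<eta> \<Longrightarrow> c \<le> \<rho> ^ n * \<eta>"
proof -
  obtain N where N: "c / e < \<rho> ^ N"
    using real_arch_pow[OF \<rho>] by blast
  have "c \<le> \<rho> ^ n * \<eta>" if "N \<le> n" "e \<le> \<eta>" for n \<eta>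
  proof -
    have "c \<le> \<rho> ^ N * e"
      using N e by (simp add: divide_less_eq)
    also have "\<dots> \<le> \<rho> ^ n * \<eta>"
      using that \<rho> e by (intro mult_mono power_increasing) auto
    finally show ?thesis .
  qed
  then show thesis
    using that by blast
qed

lemma power_mult_bounds:
  fixes \<rho> :: real
  assumes "1 < \<rho>" "l \<le> N" "0 < lo" "\<eta> \<in> {lo..hi}"
  shows "lo \<le> \<rho> ^ l * \<eta>" "\<rho> ^ l * \<eta> \<le> \<rho> ^ N * hi"
proof -
  have "1 * \<eta> \<le> \<rho> ^ l * \<eta>"
    using assms by (intro mult_right_mono one_le_power) auto
  then show "lo \<le> \<rho> ^ l * \<eta>"
    using assms(4) by simp
  show "\<rho> ^ l * \<eta> \<le> \<rho> ^ N * hi"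
    using assms by (intro mult_mono power_increasing) auto
qed

lemma clip_atLeastAtMost: "lo \<le> hi \<Longrightarrow> clip lo hi q \<in> {lo..hi}"
  by (auto simp: clip_def)

lemma initial_step_size_range:
  fixes \<eta> :: "nat \<Rightarrow> real"
  assumes "\<eta> 0 = 1" "\<And>t. \<eta> (Suc t) \<in> {lo..hi}"
  shows "\<eta> t \<in> {min 1 lo..max 1 hi}"
proof (cases t)
  case (Suc n)
  then show ?thesis
    using assms(2)[of n] by (auto simp: min_le_iff_disj le_max_iff_disj)
qed (use assms(1) in auto)

section \<open>The composite objective and the GPALM iteration\<close>

locale composite_objective =
  fixes f :: "'a::euclidean_space \<Rightarrow> 'b::euclidean_space \<Rightarrow> real"
    and gx :: "'a \<Rightarrow> 'b \<Rightarrow> 'a" and gz :: "'a \<Rightarrow> 'b \<Rightarrow> 'b"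
    and g :: "'a \<Rightarrow> ereal" and h :: "'b \<Rightarrow> ereal"
    and M :: real
  assumes f_grad: "\<And>x z. ((\<lambda>(u, v). f u v) has_derivative
                        (\<lambda>(du, dv). gx x z \<bullet> du + gz x z \<bullet> dv)) (at (x, z))"
    and f_lip: "\<And>x1 z1 x2 z2. norm (gx x1 z1 - gx x2 z2, gz x1 z1 - gz x2 z2)
                               \<le> M * norm (x1 - x2, z1 - z2)"
    and g_proper: "proper_fun g" and h_proper: "proper_fun h"
    and g_lsc: "lsc_fun g" and h_lsc: "lsc_fun h"
    and g_dd: "\<And>u. g u \<noteq> \<infinity> \<Longrightarrow> dir_differentiable g u"
    and h_dd: "\<And>v. h v \<noteq> \<infinity> \<Longrightarrow> dir_differentiable h v"
begin

definition grad :: "'a \<times> 'b \<Rightarrow> 'a \<times> 'b" where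
  "grad q = (gx (fst q) (snd q), gz (fst q) (snd q))"

lemma g_not_MInf: "g u \<noteq> -\<infinity>" and h_not_MInf: "h v \<noteq> -\<infinity>"
  using g_proper h_proper unfolding proper_fun_def by blast+

lemma F_not_MInf: "Fobj f g h q \<noteq> -\<infinity>"
  using g_not_MInf h_not_MInf by (cases q) (simp add: Fobj_def)

lemma f_has_derivative: "((\<lambda>q. f (fst q) (snd q)) has_derivative (\<lambda>d. grad q \<bullet> d)) (at q)"
proof -
  have "(\<lambda>(du, dv). gx (fst q) (snd q) \<bullet> du + gz (fst q) (snd q) \<bullet> dv) = (\<lambda>d. grad q \<bullet> d)"
    by (auto simp: grad_def)
  then show ?thesis
    using f_grad[of "fst q" "snd q"] by (simp add: case_prod_beta')
qed

lemma grad_lipschitz: "norm (grad q - grad q') \<le> M * norm (q - q')"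
  using f_lip[of "fst q" "snd q" "fst q'" "snd q'"] by (cases q; cases q') (simp add: grad_def)

lemma grad_tendsto:
  assumes "P \<longlonglongrightarrow> q"
  shows "(\<lambda>n. grad (P n)) \<longlonglongrightarrow> grad q"
proof -
  have "\<forall>\<^sub>F n in sequentially. norm (grad (P n) - grad q) \<le> M * norm (P n - q)"
    by (simp add: grad_lipschitz)
  moreover have "(\<lambda>n. M * norm (P n - q)) \<longlonglongrightarrow> 0"
    using assms by (intro tendsto_mult_right_zero tendsto_norm_zero LIM_zero)
  ultimately have "(\<lambda>n. grad (P n) - grad q) \<longlonglongrightarrow> 0"
    by (rule Lim_null_comparison)
  then show ?thesis
    by (rule LIM_zero_cancel)
qed

lemma f_descent:
  "f (x + dx) (z + dz) \<le> f x z + gx x z \<bullet> dx + gz x z \<bullet> dz + M / 2 * ((norm dx)\<^sup>2 + (norm dz)\<^sup>2)"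
  using lipschitz_gradient_descent[OF f_has_derivative grad_lipschitz, of "(x, z)" "(dx, dz)"]
  by (simp add: grad_def norm_Pair)

lemma f_dir_quotient_tendsto:
  "((\<lambda>\<tau>. (f (x + \<tau> *\<^sub>R dx) (z + \<tau> *\<^sub>R dz) - f x z) / \<tau>) \<longlongrightarrow> gx x z \<bullet> dx + gz x z \<bullet> dz)
    (at_right 0)"
  using has_derivative_dir_quotient_tendsto[OF f_has_derivative, of "(x, z)" "(dx, dz)"]
  by (simp add: grad_def)

lemma prox_step_sufficient_decrease:
  assumes u: "u \<in> prox g \<eta>1 (x - (1 / \<eta>1) *\<^sub>R gx x z)"
    and w: "w \<in> prox h \<eta>2 (z - (1 / \<eta>2) *\<^sub>R gz u z)"
    and \<eta>1: "0 < \<eta>1" "M \<le> (1 - \<sigma>1) * \<eta>1" and \<eta>2: "0 < \<eta>2" "M \<le> (1 - \<sigma>2) * \<eta>2"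
  shows "Fobj f g h (u, w) \<le> Fobj f g h (x, z) - ereal (\<sigma>1 / 2 * \<eta>1 * (norm (u - x))\<^sup>2)
           - ereal (\<sigma>2 / 2 * \<eta>2 * (norm (w - z))\<^sup>2)"
proof (cases "g x = \<infinity> \<or> h z = \<infinity>")
  case True
  then have "Fobj f g h (x, z) = \<infinity>"
    using g_not_MInf h_not_MInf by (auto simp: Fobj_def)
  then show ?thesis
    by simp
next
  case False
  then obtain a b where ab: "g x = ereal a" "h z = ereal b"
    using g_not_MInf h_not_MInf by (meson ereal_cases)
  have "g u \<le> ereal (a + gx x z \<bullet> (x - u) - \<eta>1 / 2 * (norm (u - x))\<^sup>2)"
    using prox_inequality[OF u \<eta>1(1) g_not_MInf, of x] ab by (simp add: add_diff_eq)
  then obtain a' where a': "g u = ereal a'" "a' \<le> a + gx x z \<bullet> (x - u) - \<eta>1 / 2 * (norm (u - x))\<^sup>2"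
    using g_not_MInf[of u] by (cases "g u") auto
  have "h w \<le> ereal (b + gz u z \<bullet> (z - w) - \<eta>2 / 2 * (norm (w - z))\<^sup>2)"
    using prox_inequality[OF w \<eta>2(1) h_not_MInf, of z] ab by (simp add: add_diff_eq)
  then obtain b' where b': "h w = ereal b'" "b' \<le> b + gz u z \<bullet> (z - w) - \<eta>2 / 2 * (norm (w - z))\<^sup>2"
    using h_not_MInf[of w] by (cases "h w") auto
  have "f u z \<le> f x z + gx x z \<bullet> (u - x) + M / 2 * (norm (u - x))\<^sup>2"
    using f_descent[of x "u - x" z 0] by simp
  moreover have "f u w \<le> f u z + gz u z \<bullet> (w - z) + M / 2 * (norm (w - z))\<^sup>2"
    using f_descent[of u 0 z "w - z"] by simp
  moreover have "M / 2 * (norm (u - x))\<^sup>2 \<le> (1 - \<sigma>1) * \<eta>1 / 2 * (norm (u - x))\<^sup>2"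
    using \<eta>1 by (intro mult_right_mono) auto
  moreover have "M / 2 * (norm (w - z))\<^sup>2 \<le> (1 - \<sigma>2) * \<eta>2 / 2 * (norm (w - z))\<^sup>2"
    using \<eta>2 by (intro mult_right_mono) auto
  ultimately have "f u w + a' + b'
      \<le> f x z + a + b - \<sigma>1 / 2 * \<eta>1 * (norm (u - x))\<^sup>2 - \<sigma>2 / 2 * \<eta>2 * (norm (w - z))\<^sup>2"
    using a'(2) b'(2) by (simp add: inner_diff_right algebra_simps)
  then show ?thesis
    using ab a' b' by (simp add: Fobj_def)
qed

lemma prox_fixed_point_dir_deriv_nonneg:
  assumes fin: "\<bar>g xs\<bar> \<noteq> \<infinity>" "\<bar>h zs\<bar> \<noteq> \<infinity>"
    and g_ineq: "\<And>v. g xs \<le> g v + ereal (gx xs zs \<bullet> (v - xs) + E / 2 * (norm (v - xs))\<^sup>2)"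
    and h_ineq: "\<And>w. h zs \<le> h w + ereal (gz xs zs \<bullet> (w - zs) + E / 2 * (norm (w - zs))\<^sup>2)"
  shows "\<exists>L. 0 \<le> L \<and> has_dir_deriv (Fobj f g h) (xs, zs) (dx, dz) L"
proof -
  obtain Lg Lh where Lg: "Lg \<noteq> -\<infinity>" "has_dir_deriv g xs dx Lg"
    and Lh: "Lh \<noteq> -\<infinity>" "has_dir_deriv h zs dz Lh"
    using g_dd[of xs] h_dd[of zs] fin unfolding dir_differentiable_def by fastforce
  have "ereal (- (gx xs zs \<bullet> dx)) \<le> Lg" "ereal (- (gz xs zs \<bullet> dz)) \<le> Lh"
    using proximal_subgradient_le_dir_deriv[OF fin(1) g_ineq Lg(2)]
      proximal_subgradient_le_dir_deriv[OF fin(2) h_ineq Lh(2)] .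
  then have "ereal (gx xs zs \<bullet> dx + gz xs zs \<bullet> dz) + ereal (- (gx xs zs \<bullet> dx)) + ereal (- (gz xs zs \<bullet> dz))
      \<le> ereal (gx xs zs \<bullet> dx + gz xs zs \<bullet> dz) + Lg + Lh"
    by (intro add_mono order_refl)
  then have "0 \<le> ereal (gx xs zs \<bullet> dx + gz xs zs \<bullet> dz) + Lg + Lh"
    by (simp add: zero_ereal_def)
  moreover have "has_dir_deriv (Fobj f g h) (xs, zs) (dx, dz) (ereal (gx xs zs \<bullet> dx + gz xs zs \<bullet> dz) + Lg + Lh)"
    using Lg Lh fin g_not_MInf h_not_MInf by (intro has_dir_deriv_Fobj f_dir_quotient_tendsto) auto
  ultimately show ?thesis
    by blast
qed

lemma d_stationary_if_prox_fixed_point: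
  assumes g_ineq: "\<And>v. g xs \<le> g v + ereal (gx xs zs \<bullet> (v - xs) + E / 2 * (norm (v - xs))\<^sup>2)"
    and h_ineq: "\<And>w. h zs \<le> h w + ereal (gz xs zs \<bullet> (w - zs) + E / 2 * (norm (w - zs))\<^sup>2)"
  shows "d_stationary (Fobj f g h) (xs, zs)"
proof -
  obtain v0 w0 where "g v0 \<noteq> \<infinity>" "h w0 \<noteq> \<infinity>"
    using g_proper h_proper unfolding proper_fun_def by blast
  then have fin: "\<bar>g xs\<bar> \<noteq> \<infinity>" "\<bar>h zs\<bar> \<noteq> \<infinity>"
    using g_ineq[of v0] h_ineq[of w0] g_not_MInf h_not_MInf by auto
  note nonneg = prox_fixed_point_dir_deriv_nonneg[OF fin g_ineq h_ineq]
  have "\<bar>Fobj f g h (xs, zs)\<bar> \<noteq> \<infinity>"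
    using fin by (cases "g xs"; cases "h zs") (auto simp: Fobj_def)
  moreover have "\<exists>L. L \<noteq> -\<infinity> \<and> has_dir_deriv (Fobj f g h) (xs, zs) d L" for d
    using nonneg[of "fst d" "snd d"] by force
  moreover have "0 \<le> L" if "has_dir_deriv (Fobj f g h) (xs, zs) d L" for d L
    using nonneg[of "fst d" "snd d"] has_dir_deriv_unique[OF that] by force
  ultimately show ?thesis
    unfolding d_stationary_def dir_differentiable_def by blast
qed

end

text \<open>The step-size initialisation of GPALM enters only through the bounds
  \<open>\<eta>min \<le> \<eta>hx t, \<eta>hz t \<le> \<eta>max\<close>.\<close>

locale gpalm = composite_objective f gx gz g h M
  for f :: "'a::euclidean_space \<Rightarrow> 'b::euclidean_space \<Rightarrow> real" and gx gz g h M +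
  fixes r :: nat and \<rho>1 \<rho>2 \<sigma>1 \<sigma>2 \<eta>min \<eta>max :: real
    and x :: "nat \<Rightarrow> 'a" and z :: "nat \<Rightarrow> 'b"
    and \<eta>x \<eta>z \<eta>hx \<eta>hz :: "nat \<Rightarrow> real"
    and lt :: "nat \<Rightarrow> nat"
    and xt :: "nat \<Rightarrow> nat \<Rightarrow> 'a" and zt :: "nat \<Rightarrow> nat \<Rightarrow> 'b"
    and K :: "('a \<times> 'b) set"
  assumes r_ge: "r \<ge> 1"
    and \<rho>1_gt: "\<rho>1 > 1" and \<rho>2_gt: "\<rho>2 > 1"
    and \<sigma>1_in: "0 < \<sigma>1" "\<sigma>1 < 1" and \<sigma>2_in: "0 < \<sigma>2" "\<sigma>2 < 1"
    and \<eta>min_pos: "0 < \<eta>min"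
    and \<eta>hx_range: "\<And>t. \<eta>hx t \<in> {\<eta>min..\<eta>max}" and \<eta>hz_range: "\<And>t. \<eta>hz t \<in> {\<eta>min..\<eta>max}"
    and step_x: "\<And>t. \<eta>x t = \<rho>1 ^ lt t * \<eta>hx t"
    and step_z: "\<And>t. \<eta>z t = \<rho>2 ^ lt t * \<eta>hz t"
    and trial_x: "\<And>t l. l \<le> lt t \<Longrightarrow>
        xt t l \<in> prox g (\<rho>1 ^ l * \<eta>hx t)
                   (x t - (1 / (\<rho>1 ^ l * \<eta>hx t)) *\<^sub>R gx (x t) (z t))"
    and trial_z: "\<And>t l. l \<le> lt t \<Longrightarrow>
        zt t l \<in> prox h (\<rho>2 ^ l * \<eta>hz t)
                   (z t - (1 / (\<rho>2 ^ l * \<eta>hz t)) *\<^sub>R gz (xt t l) (z t))"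
    and reject: "\<And>t l. l < lt t \<Longrightarrow>
        \<not> (Fobj f g h (xt t l, zt t l)
             \<le> Max ((\<lambda>j. Fobj f g h (x j, z j)) ` {Suc t - r..t})
               - ereal (\<sigma>1 / 2 * (\<rho>1 ^ l * \<eta>hx t) * (norm (xt t l - x t))\<^sup>2)
               - ereal (\<sigma>2 / 2 * (\<rho>2 ^ l * \<eta>hz t) * (norm (zt t l - z t))\<^sup>2))"
    and accept: "\<And>t. Fobj f g h (x (Suc t), z (Suc t))
             \<le> Max ((\<lambda>j. Fobj f g h (x j, z j)) ` {Suc t - r..t})
               - ereal (\<sigma>1 / 2 * \<eta>x t * (norm (x (Suc t) - x t))\<^sup>2)
               - ereal (\<sigma>2 / 2 * \<eta>z t * (norm (z (Suc t) - z t))\<^sup>2)"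
    and next_x: "\<And>t. x (Suc t) = xt t (lt t)"
    and next_z: "\<And>t. z (Suc t) = zt t (lt t)"
    and K_compact: "compact K" and K_contains: "range (\<lambda>t. (x t, z t)) \<subseteq> K"
    and F_cont: "continuous_on K (Fobj f g h)"
begin

definition window_max :: "nat \<Rightarrow> ereal" where
  "window_max t = Max ((\<lambda>j. Fobj f g h (x j, z j)) ` {Suc t - r..t})"

lemma iterate_le_window_max: "Fobj f g h (x t, z t) \<le> window_max t"
  unfolding window_max_def using r_ge by (intro Max_ge) auto

lemma backtracking_bounded:
  obtains N where "\<And>t. lt t \<le> N"
proof -
  obtain N1 where N1: "\<And>n \<eta>. N1 \<le> n \<Longrightarrow> \<eta>min \<le> \<eta> \<Longrightarrow> M / (1 - \<sigma>1) \<le> \<rho>1 ^ n * \<eta>"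
    using power_mult_eventually_ge[OF \<rho>1_gt \<eta>min_pos] by blast
  obtain N2 where N2: "\<And>n \<eta>. N2 \<le> n \<Longrightarrow> \<eta>min \<le> \<eta> \<Longrightarrow> M / (1 - \<sigma>2) \<le> \<rho>2 ^ n * \<eta>"
    using power_mult_eventually_ge[OF \<rho>2_gt \<eta>min_pos] by blast
  define N where "N = max N1 N2"
  have "lt t \<le> N" for t
  proof (rule ccontr)
    assume "\<not> lt t \<le> N"
    then have N_lt: "N < lt t"
      by simp
    have "M \<le> (1 - \<sigma>1) * (\<rho>1 ^ N * \<eta>hx t)"
      using N1[of N "\<eta>hx t"] \<eta>hx_range[of t] \<sigma>1_in by (simp add: N_def pos_divide_le_eq mult.commute)
    moreover have "M \<le> (1 - \<sigma>2) * (\<rho>2 ^ N * \<eta>hz t)"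
      using N2[of N "\<eta>hz t"] \<eta>hz_range[of t] \<sigma>2_in by (simp add: N_def pos_divide_le_eq mult.commute)
    moreover have "0 < \<rho>1 ^ N * \<eta>hx t" "0 < \<rho>2 ^ N * \<eta>hz t"
      using \<eta>hx_range[of t] \<eta>hz_range[of t] \<eta>min_pos \<rho>1_gt \<rho>2_gt by auto
    ultimately have "Fobj f g h (xt t N, zt t N) \<le> Fobj f g h (x t, z t)
        - ereal (\<sigma>1 / 2 * (\<rho>1 ^ N * \<eta>hx t) * (norm (xt t N - x t))\<^sup>2)
        - ereal (\<sigma>2 / 2 * (\<rho>2 ^ N * \<eta>hz t) * (norm (zt t N - z t))\<^sup>2)"
      using N_lt by (intro prox_step_sufficient_decrease trial_x trial_z) auto
    also have "\<dots> \<le> window_max t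
        - ereal (\<sigma>1 / 2 * (\<rho>1 ^ N * \<eta>hx t) * (norm (xt t N - x t))\<^sup>2)
        - ereal (\<sigma>2 / 2 * (\<rho>2 ^ N * \<eta>hz t) * (norm (zt t N - z t))\<^sup>2)"
      by (intro ereal_minus_mono iterate_le_window_max order_refl)
    finally show False
      using reject[OF N_lt] unfolding window_max_def by blast
  qed
  then show thesis
    by (rule that)
qed

lemma step_sizes_bounded:
  obtains E where "\<And>t. \<eta>min \<le> \<eta>x t \<and> \<eta>x t \<le> E" "\<And>t. \<eta>min \<le> \<eta>z t \<and> \<eta>z t \<le> E"
proof -
  obtain N where N: "\<And>t. lt t \<le> N"
    using backtracking_bounded by metis
  show thesis
  proof
    show "\<eta>min \<le> \<eta>x t \<and> \<eta>x t \<le> max (\<rho>1 ^ N * \<eta>max) (\<rho>2 ^ N * \<eta>max)" for t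
      using power_mult_bounds[OF \<rho>1_gt N[of t] \<eta>min_pos \<eta>hx_range[of t]] by (simp add: step_x)
    show "\<eta>min \<le> \<eta>z t \<and> \<eta>z t \<le> max (\<rho>1 ^ N * \<eta>max) (\<rho>2 ^ N * \<eta>max)" for t
      using power_mult_bounds[OF \<rho>2_gt N[of t] \<eta>min_pos \<eta>hz_range[of t]] by (simp add: step_z)
  qed
qed

lemma steps_pos: "0 < \<eta>x t" "0 < \<eta>z t"
  using step_sizes_bounded \<eta>min_pos by (metis order_less_le_trans)+

lemma iterate_prox_x: "x (Suc t) \<in> prox g (\<eta>x t) (x t - (1 / \<eta>x t) *\<^sub>R gx (x t) (z t))"
  using trial_x[of "lt t" t] by (simp add: step_x next_x)

lemma iterate_prox_z: "z (Suc t) \<in> prox h (\<eta>z t) (z t - (1 / \<eta>z t) *\<^sub>R gz (x (Suc t)) (z t))"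
  using trial_z[of "lt t" t] by (simp add: step_z next_z next_x)

lemma iterate_finite: "\<bar>Fobj f g h (x (Suc t), z (Suc t))\<bar> \<noteq> \<infinity>"
proof -
  obtain v0 w0 where "g v0 \<noteq> \<infinity>" "h w0 \<noteq> \<infinity>"
    using g_proper h_proper unfolding proper_fun_def by blast
  then have "g (x (Suc t)) \<noteq> \<infinity>" "h (z (Suc t)) \<noteq> \<infinity>"
    using prox_point_finite[OF iterate_prox_x steps_pos(1)] prox_point_finite[OF iterate_prox_z steps_pos(2)]
    by auto
  then show ?thesis
    using g_not_MInf h_not_MInf
    by (cases "g (x (Suc t))"; cases "h (z (Suc t))") (auto simp: Fobj_def)
qed

lemma nonmonotone_decrease:
  "Fobj f g h (x (Suc t), z (Suc t))
    \<le> window_max t - ereal (min \<sigma>1 \<sigma>2 * \<eta>min / 2 * (dist (x t, z t) (x (Suc t), z (Suc t)))\<^sup>2)"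
proof -
  obtain E where E: "\<eta>min \<le> \<eta>x t" "\<eta>min \<le> \<eta>z t"
    using step_sizes_bounded by metis
  let ?c = "min \<sigma>1 \<sigma>2 * \<eta>min / 2"
  have "?c \<le> \<sigma>1 / 2 * \<eta>x t" "?c \<le> \<sigma>2 / 2 * \<eta>z t"
    using E \<sigma>1_in \<sigma>2_in \<eta>min_pos by (auto intro!: mult_mono)
  then have "?c * (norm (x (Suc t) - x t))\<^sup>2 \<le> \<sigma>1 / 2 * \<eta>x t * (norm (x (Suc t) - x t))\<^sup>2"
    "?c * (norm (z (Suc t) - z t))\<^sup>2 \<le> \<sigma>2 / 2 * \<eta>z t * (norm (z (Suc t) - z t))\<^sup>2"
    by (auto intro: mult_right_mono)
  moreover have "(dist (x t, z t) (x (Suc t), z (Suc t)))\<^sup>2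
      = (norm (x (Suc t) - x t))\<^sup>2 + (norm (z (Suc t) - z t))\<^sup>2"
    by (simp add: norm_Pair dist_norm norm_minus_commute)
  ultimately have "?c * (dist (x t, z t) (x (Suc t), z (Suc t)))\<^sup>2
      \<le> \<sigma>1 / 2 * \<eta>x t * (norm (x (Suc t) - x t))\<^sup>2 + \<sigma>2 / 2 * \<eta>z t * (norm (z (Suc t) - z t))\<^sup>2"
    by (simp add: distrib_left)
  then have "window_max t - ereal (\<sigma>1 / 2 * \<eta>x t * (norm (x (Suc t) - x t))\<^sup>2)
      - ereal (\<sigma>2 / 2 * \<eta>z t * (norm (z (Suc t) - z t))\<^sup>2)
      \<le> window_max t - ereal (?c * (dist (x t, z t) (x (Suc t), z (Suc t)))\<^sup>2)"
    by (cases "window_max t") auto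
  then show ?thesis
    by (rule order_trans[OF accept[of t, folded window_max_def]])
qed

lemma window_max_antimono:
  assumes "t \<le> t'"
  shows "window_max t' \<le> window_max t"
proof (rule lift_Suc_antimono_le[OF _ assms])
  fix n
  let ?d = "min \<sigma>1 \<sigma>2 * \<eta>min / 2 * (dist (x n, z n) (x (Suc n), z (Suc n)))\<^sup>2"
  have "0 \<le> ?d"
    using \<sigma>1_in \<sigma>2_in \<eta>min_pos by simp
  then have "window_max n - ereal ?d \<le> window_max n"
    by (cases "window_max n") auto
  with nonmonotone_decrease have "Fobj f g h (x (Suc n), z (Suc n)) \<le> window_max n"
    by (rule order_trans)
  then show "window_max (Suc n) \<le> window_max n"
    unfolding window_max_def by (rule Max_window_Suc_le[OF r_ge])
qed

lemma iterate_le_window_max_r: "Fobj f g h (x (Suc t), z (Suc t)) \<le> window_max r"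
proof (cases "t < r")
  case True
  then show ?thesis
    unfolding window_max_def by (intro Max_ge) auto
next
  case False
  then show ?thesis
    using iterate_le_window_max[of "Suc t"] window_max_antimono[of r "Suc t"] by simp
qed

lemma window_max_r_finite: "\<bar>window_max r\<bar> \<noteq> \<infinity>"
proof -
  have "window_max r \<in> (\<lambda>j. Fobj f g h (x j, z j)) ` {Suc r - r..r}"
    unfolding window_max_def using r_ge by (intro Max_in) auto
  then obtain j where "j \<in> {Suc r - r..r}" "window_max r = Fobj f g h (x j, z j)"
    by blast
  then show ?thesis
    using iterate_finite[of "j - 1"] by simp
qed

lemma steps_tendsto_zero: "(\<lambda>t. dist (x t, z t) (x (Suc t), z (Suc t))) \<longlonglongrightarrow> 0"
proof -
  define C where "C = real_of_ereal (window_max r)"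
  define S where "S = K \<inter> Fobj f g h -` {..ereal C}"
  define \<phi> where "\<phi> q = real_of_ereal (Fobj f g h q)" for q
  \<comment> \<open>Shifted by one: \<open>F (x 0, z 0)\<close> may be infinite, all later values are finite.\<close>
  define p where "p t = (x (Suc t), z (Suc t))" for t
  have F_p: "Fobj f g h (p t) = ereal (\<phi> (p t))" for t
    using iterate_finite[of t] unfolding \<phi>_def p_def by (simp add: ereal_real')
  have "window_max r = ereal C"
    using window_max_r_finite unfolding C_def by (simp add: ereal_real')
  then have p_in: "range p \<subseteq> S"
    using K_contains iterate_le_window_max_r unfolding S_def p_def by auto
  have S: "compact S" "continuous_on S \<phi>"
    unfolding S_def \<phi>_def using K_compact F_cont F_not_MInf
    by (auto intro: compact_Int_vimage_atMost continuous_on_real_of_ereal_vimage_atMost)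
  have decrease: "\<phi> (p (Suc t)) \<le> Max ((\<lambda>j. \<phi> (p j)) ` {Suc t - r..t})
      - min \<sigma>1 \<sigma>2 * \<eta>min / 2 * (dist (p t) (p (Suc t)))\<^sup>2" if "r \<le> t" for t
  proof -
    have "window_max (Suc t) = Max ((\<lambda>j. Fobj f g h (x j, z j)) ` Suc ` {Suc t - r..t})"
      unfolding window_max_def using that by (simp add: Suc_diff_le)
    also have "\<dots> = Max (ereal ` (\<lambda>j. \<phi> (p j)) ` {Suc t - r..t})"
      unfolding image_image by (simp add: F_p[unfolded p_def] p_def)
    also have "\<dots> = ereal (Max ((\<lambda>j. \<phi> (p j)) ` {Suc t - r..t}))"
      using r_ge by (intro mono_Max_commute[symmetric]) (auto simp: mono_def)
    finally show ?thesis
      using nonmonotone_decrease[of "Suc t"] F_p[of "Suc t"] unfolding p_def by simp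
  qed
  have "(\<lambda>t. dist (p t) (p (Suc t))) \<longlonglongrightarrow> 0"
    using \<sigma>1_in \<sigma>2_in \<eta>min_pos
    by (intro nonmonotone_descent_steps_tendsto_zero[OF r_ge _ S p_in decrease]) auto
  then show ?thesis
    unfolding p_def by (rule LIMSEQ_imp_Suc[where f = "\<lambda>t. dist (x t, z t) (x (Suc t), z (Suc t))"])
qed

lemma successor_tendsto:
  assumes s: "strict_mono s" and lim: "(\<lambda>t. (x (s t), z (s t))) \<longlonglongrightarrow> q"
  shows "(\<lambda>t. (x (Suc (s t)), z (Suc (s t)))) \<longlonglongrightarrow> q"
proof -
  have "(\<lambda>t. dist (x (s t), z (s t)) (x (Suc (s t)), z (Suc (s t)))) \<longlonglongrightarrow> 0"
    using LIMSEQ_subseq_LIMSEQ[OF steps_tendsto_zero s] by (simp add: o_def)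
  then have "(\<lambda>t. (x (s t), z (s t)) - (x (Suc (s t)), z (Suc (s t)))) \<longlonglongrightarrow> 0"
    unfolding dist_norm by (rule tendsto_norm_zero_cancel)
  from tendsto_minus[OF this] have "(\<lambda>t. (x (Suc (s t)), z (Suc (s t))) - (x (s t), z (s t))) \<longlonglongrightarrow> 0"
    by simp
  with lim show ?thesis
    by (rule Lim_transform)
qed

lemma prox_inequalities_at_accumulation_point:
  assumes s: "strict_mono s" and lim: "(\<lambda>t. (x (s t), z (s t))) \<longlonglongrightarrow> (xs, zs)"
  obtains E where "\<And>v. g xs \<le> g v + ereal (gx xs zs \<bullet> (v - xs) + E / 2 * (norm (v - xs))\<^sup>2)"
    and "\<And>w. h zs \<le> h w + ereal (gz xs zs \<bullet> (w - zs) + E / 2 * (norm (w - zs))\<^sup>2)"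
proof -
  obtain E where E: "\<And>t. \<eta>x t \<le> E" "\<And>t. \<eta>z t \<le> E"
    using step_sizes_bounded by metis
  have lim1: "(\<lambda>t. (x (Suc (s t)), z (Suc (s t)))) \<longlonglongrightarrow> (xs, zs)"
    using successor_tendsto[OF s lim] .
  have x_lim: "(\<lambda>t. x (s t)) \<longlonglongrightarrow> xs" and z_lim: "(\<lambda>t. z (s t)) \<longlonglongrightarrow> zs"
    using tendsto_fst[OF lim] tendsto_snd[OF lim] by simp_all
  have x1_lim: "(\<lambda>t. x (Suc (s t))) \<longlonglongrightarrow> xs" and z1_lim: "(\<lambda>t. z (Suc (s t))) \<longlonglongrightarrow> zs"
    using tendsto_fst[OF lim1] tendsto_snd[OF lim1] by simp_all
  have gx_lim: "(\<lambda>t. gx (x (s t)) (z (s t))) \<longlonglongrightarrow> gx xs zs"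
    using tendsto_fst[OF grad_tendsto[OF lim]] by (simp add: grad_def)
  have gz_lim: "(\<lambda>t. gz (x (Suc (s t))) (z (s t))) \<longlonglongrightarrow> gz xs zs"
    using tendsto_snd[OF grad_tendsto[OF tendsto_Pair[OF x1_lim z_lim]]] by (simp add: grad_def)
  have "g (x (Suc (s t)))
      \<le> g v + ereal (gx (x (s t)) (z (s t)) \<bullet> (v - x (Suc (s t))) + E / 2 * (norm (v - x (s t)))\<^sup>2)"
    for t v by (rule prox_inequality_relaxed[OF iterate_prox_x steps_pos(1) E(1) g_not_MInf])
  then have "g xs \<le> g v + ereal (gx xs zs \<bullet> (v - xs) + E / 2 * (norm (v - xs))\<^sup>2)" for v
    by (rule lsc_prox_inequality_limit[OF g_lsc _ x1_lim x_lim gx_lim])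
  moreover have "h (z (Suc (s t)))
      \<le> h w + ereal (gz (x (Suc (s t))) (z (s t)) \<bullet> (w - z (Suc (s t))) + E / 2 * (norm (w - z (s t)))\<^sup>2)"
    for t w by (rule prox_inequality_relaxed[OF iterate_prox_z steps_pos(2) E(2) h_not_MInf])
  then have "h zs \<le> h w + ereal (gz xs zs \<bullet> (w - zs) + E / 2 * (norm (w - zs))\<^sup>2)" for w
    by (rule lsc_prox_inequality_limit[OF h_lsc _ z1_lim z_lim gz_lim])
  ultimately show thesis
    by (rule that)
qed

end

theorem theorem3:
  fixes f :: "'a::euclidean_space \<Rightarrow> 'b::euclidean_space \<Rightarrow> real"
    and gx :: "'a \<Rightarrow> 'b \<Rightarrow> 'a" and gz :: "'a \<Rightarrow> 'b \<Rightarrow> 'b"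
    and g :: "'a \<Rightarrow> ereal" and h :: "'b \<Rightarrow> ereal"
    and M :: real
    and r :: nat and \<rho>1 \<rho>2 \<sigma>1 \<sigma>2 \<eta>lo \<eta>hi :: real
    and x :: "nat \<Rightarrow> 'a" and z :: "nat \<Rightarrow> 'b"
    and \<eta>x \<eta>z \<eta>hx \<eta>hz :: "nat \<Rightarrow> real"
    and lt :: "nat \<Rightarrow> nat"
    and xt :: "nat \<Rightarrow> nat \<Rightarrow> 'a" and zt :: "nat \<Rightarrow> nat \<Rightarrow> 'b"
    and K :: "('a \<times> 'b) set"
    and xs :: 'a and zs :: 'b
  \<comment> \<open>(i) f differentiable, gradient (gx, gz) jointly M-Lipschitz\<close>
  assumes f_grad: "\<And>x z. ((\<lambda>(u, v). f u v) has_derivative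
                        (\<lambda>(du, dv). gx x z \<bullet> du + gz x z \<bullet> dv)) (at (x, z))"
    and M_pos: "M > 0"
    and f_lip: "\<And>x1 z1 x2 z2. norm (gx x1 z1 - gx x2 z2, gz x1 z1 - gz x2 z2)
                               \<le> M * norm (x1 - x2, z1 - z2)"
    and g_proper: "proper_fun g" and h_proper: "proper_fun h"
    and g_lsc: "lsc_fun g" and h_lsc: "lsc_fun h"
    and g_dd: "\<And>u. g u \<noteq> \<infinity> \<Longrightarrow> dir_differentiable g u"
    and h_dd: "\<And>v. h v \<noteq> \<infinity> \<Longrightarrow> dir_differentiable h v"
  \<comment> \<open>(ii) F bounded below\<close>
    and F_bdd: "\<exists>c::real. \<forall>p. Fobj f g h p \<ge> ereal c"
  \<comment> \<open>(iii) prox-boundedness\<close>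
    and prox_bdd: "\<exists>\<eta>>0. (\<exists>c::real. \<forall>u. g u + ereal (\<eta> / 2 * (norm u)\<^sup>2) \<ge> ereal c)
                        \<and> (\<exists>c::real. \<forall>v. h v + ereal (\<eta> / 2 * (norm v)\<^sup>2) \<ge> ereal c)"
  \<comment> \<open>algorithm parameters\<close>
    and r_ge: "r \<ge> 1"
    and \<rho>1_gt: "\<rho>1 > 1" and \<rho>2_gt: "\<rho>2 > 1"
    and \<sigma>1_in: "0 < \<sigma>1" "\<sigma>1 < 1" and \<sigma>2_in: "0 < \<sigma>2" "\<sigma>2 < 1"
    and \<eta>lo_pos: "0 < \<eta>lo" and \<eta>lo_hi: "\<eta>lo \<le> \<eta>hi"
    and init: "\<eta>hx 0 = 1" "\<eta>hz 0 = 1"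
  \<comment> \<open>GPALM iteration t: trial points for l = 0, ..., lt t (backtracking)\<close>
    and step_x: "\<And>t. \<eta>x t = \<rho>1 ^ lt t * \<eta>hx t"
    and step_z: "\<And>t. \<eta>z t = \<rho>2 ^ lt t * \<eta>hz t"
    and trial_x: "\<And>t l. l \<le> lt t \<Longrightarrow>
        xt t l \<in> prox g (\<rho>1 ^ l * \<eta>hx t)
                   (x t - (1 / (\<rho>1 ^ l * \<eta>hx t)) *\<^sub>R gx (x t) (z t))"
    and trial_z: "\<And>t l. l \<le> lt t \<Longrightarrow>
        zt t l \<in> prox h (\<rho>2 ^ l * \<eta>hz t)
                   (z t - (1 / (\<rho>2 ^ l * \<eta>hz t)) *\<^sub>R gz (xt t l) (z t))"
    and reject: "\<And>t l. l < lt t \<Longrightarrow>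
        \<not> (Fobj f g h (xt t l, zt t l)
             \<le> Max ((\<lambda>j. Fobj f g h (x j, z j)) ` {Suc t - r..t})
               - ereal (\<sigma>1 / 2 * (\<rho>1 ^ l * \<eta>hx t) * (norm (xt t l - x t))\<^sup>2)
               - ereal (\<sigma>2 / 2 * (\<rho>2 ^ l * \<eta>hz t) * (norm (zt t l - z t))\<^sup>2))"
    and accept: "\<And>t. Fobj f g h (x (Suc t), z (Suc t))
             \<le> Max ((\<lambda>j. Fobj f g h (x j, z j)) ` {Suc t - r..t})
               - ereal (\<sigma>1 / 2 * \<eta>x t * (norm (x (Suc t) - x t))\<^sup>2)
               - ereal (\<sigma>2 / 2 * \<eta>z t * (norm (z (Suc t) - z t))\<^sup>2)"
    and next_x: "\<And>t. x (Suc t) = xt t (lt t)"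
    and next_z: "\<And>t. z (Suc t) = zt t (lt t)"
  \<comment> \<open>step-size initialisation for the next iteration\<close>
    and upd_x: "\<And>t. x (Suc t) \<noteq> x t \<Longrightarrow> \<eta>hx (Suc t) = clip \<eta>lo \<eta>hi
        (((x (Suc t) - x t) \<bullet> (gx (x (Suc t)) (z (Suc t)) - gx (x t) (z t)))
           / (norm (x (Suc t) - x t))\<^sup>2)"
    and upd_x0: "\<And>t. x (Suc t) = x t \<Longrightarrow> \<eta>hx (Suc t) \<in> {\<eta>lo..\<eta>hi}"
    and upd_z: "\<And>t. z (Suc t) \<noteq> z t \<Longrightarrow> \<eta>hz (Suc t) = clip \<eta>lo \<eta>hi
        (((z (Suc t) - z t) \<bullet> (gz (x (Suc t)) (z (Suc t)) - gz (x (Suc t)) (z t)))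
           / (norm (z (Suc t) - z t))\<^sup>2)"
    and upd_z0: "\<And>t. z (Suc t) = z t \<Longrightarrow> \<eta>hz (Suc t) \<in> {\<eta>lo..\<eta>hi}"
  \<comment> \<open>boundedness and continuity on a compact set containing the sequence\<close>
    and bounded_seq: "bounded (range (\<lambda>t. (x t, z t)))"
    and K_compact: "compact K" and K_contains: "range (\<lambda>t. (x t, z t)) \<subseteq> K"
    and F_cont: "continuous_on K (Fobj f g h)"
  \<comment> \<open>(xs, zs) is an accumulation point of the sequence\<close>
    and acc: "\<exists>s::nat \<Rightarrow> nat. strict_mono s \<and> ((\<lambda>t. (x (s t), z (s t))) \<longlonglongrightarrow> (xs, zs))"
  shows "d_stationary (Fobj f g h) (xs, zs)"
proof -
  have \<eta>hx_range: "\<eta>hx t \<in> {min 1 \<eta>lo..max 1 \<eta>hi}" for t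
    using init(1) upd_x upd_x0 clip_atLeastAtMost[OF \<eta>lo_hi]
    by (intro initial_step_size_range) metis+
  have \<eta>hz_range: "\<eta>hz t \<in> {min 1 \<eta>lo..max 1 \<eta>hi}" for t
    using init(2) upd_z upd_z0 clip_atLeastAtMost[OF \<eta>lo_hi]
    by (intro initial_step_size_range) metis+
  interpret gpalm f gx gz g h M r \<rho>1 \<rho>2 \<sigma>1 \<sigma>2 "min 1 \<eta>lo" "max 1 \<eta>hi"
      x z \<eta>x \<eta>z \<eta>hx \<eta>hz lt xt zt K
    using f_grad f_lip g_proper h_proper g_lsc h_lsc g_dd h_dd r_ge \<rho>1_gt \<rho>2_gt \<sigma>1_in \<sigma>2_in
      \<eta>lo_pos \<eta>hx_range \<eta>hz_range step_x step_z trial_x trial_z reject accept next_x next_z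
      K_compact K_contains F_cont
    by unfold_locales simp_all
  obtain s where s: "strict_mono s" "(\<lambda>t. (x (s t), z (s t))) \<longlonglongrightarrow> (xs, zs)"
    using acc by blast
  show ?thesis
  proof (rule prox_inequalities_at_accumulation_point[OF s])
    fix E
    assume "\<And>v. g xs \<le> g v + ereal (gx xs zs \<bullet> (v - xs) + E / 2 * (norm (v - xs))\<^sup>2)"
      and "\<And>w. h zs \<le> h w + ereal (gz xs zs \<bullet> (w - zs) + E / 2 * (norm (w - zs))\<^sup>2)"
    then show ?thesis
      by (rule d_stationary_if_prox_fixed_point)
  qed
qed

end
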